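(* In the setting of the context, assume $\|X_\tau\|_2\le x_{\max}$ for all $\tau$. Let $\delta\in(0,1)$ and $\lambda=\sigma x_{\max}\sqrt{\frac{2[\log(2/\delta)+\log d]}{t}}$. Then with probability at least $1-\delta$, $$|v_t(\hat\beta_t)-v_t(\beta^* )|\le\lambda\|\hat\beta_t-\beta^*\|_1.$$
   Context: Setting: $\beta^*\in\mathbb{R}^d$; a filtration $(\tilde{\mathcal{F}}_\tau)$ such that $X_\tau\in\mathbb{R}^d$ is $\tilde{\mathcal{F}}_{\tau-1}$-measurable and $Y_\tau=\mu(X_\tau^\top\beta^* )+\epsilon_\tau$, with $\epsilon_\tau$ $\tilde{\mathcal{F}}_\tau$-measurable and $\mathbb{E}[e^{\alpha\epsilon_\tau}\mid\tilde{\mathcal{F}}_{\tau-1}]\le e^{\alpha^2\sigma^2/2}$ for all $\alpha$. $m$ is convex with $\dot m=\mu$; $\ell_t(\beta)=-\frac1t\sum_{\tau=1}^t[Y_\tau X_\tau^\top\beta-m(X_\tau^\top\beta)]$; $\bar\ell_t(\beta)=-\frac1t\sum_{\tau=1}^t[\mu(X_\tau^\top\beta^* )X_\tau^\top\beta-m(X_\tau^\top\beta)]$ (the expectation of $\ell_t$ over the responses); the empirical process is $v_t(\beta)=\ell_t(\beta)-\bar\ell_t(\beta)$. $\hat\beta_t\in\arg\min_\beta\{\ell_t(\beta)+\lambda_t\|\beta\|_1\}$ is a Lasso estimate for some $\lambda_t>0$. *)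

theory Defs
  imports "HOL-Probability.Probability"
begin

definition l1norm :: "real^'d \<Rightarrow> real" where
  "l1norm x = (\<Sum>i\<in>UNIV. \<bar>x $ i\<bar>)"

definition glm_loss :: "(real \<Rightarrow> real) \<Rightarrow> nat \<Rightarrow> (nat \<Rightarrow> real^'d) \<Rightarrow> (nat \<Rightarrow> real)
    \<Rightarrow> real^'d \<Rightarrow> real" where
  "glm_loss m t X Y \<beta> =
     - (1 / real t) * (\<Sum>\<tau>=1..t. Y \<tau> * (X \<tau> \<bullet> \<beta>) - m (X \<tau> \<bullet> \<beta>))"

definition glm_loss_bar :: "(real \<Rightarrow> real) \<Rightarrow> (real \<Rightarrow> real) \<Rightarrow> real^'d \<Rightarrow> nat
    \<Rightarrow> (nat \<Rightarrow> real^'d) \<Rightarrow> real^'d \<Rightarrow> real" where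
  "glm_loss_bar m \<mu> \<beta>s t X \<beta> =
     - (1 / real t) * (\<Sum>\<tau>=1..t. \<mu> (X \<tau> \<bullet> \<beta>s) * (X \<tau> \<bullet> \<beta>) - m (X \<tau> \<bullet> \<beta>))"

definition emp_proc :: "(real \<Rightarrow> real) \<Rightarrow> (real \<Rightarrow> real) \<Rightarrow> real^'d \<Rightarrow> nat
    \<Rightarrow> (nat \<Rightarrow> real^'d) \<Rightarrow> (nat \<Rightarrow> real) \<Rightarrow> real^'d \<Rightarrow> real" where
  "emp_proc m \<mu> \<beta>s t X Y \<beta> = glm_loss m t X Y \<beta> - glm_loss_bar m \<mu> \<beta>s t X \<beta>"

end

theory Submission
  imports Defs
begin

(*
  Whatever the estimate b, v_t(b) - v_t(beta_star) = -(1/t) sum_j (b - beta_star)_j S_j with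
  S_j = sum_tau X_tau,j eps_tau: the convex parts of the loss cancel. By Hoelder it suffices that max_j |S_j| <= t lambda.
  Each S_j is a martingale with predictable weights bounded by xmax and conditionally
  sigma-sub-Gaussian increments; conditioning one step at a time shows that S_j is
  sub-Gaussian with variance proxy t xmax^2 sigma^2, so a Chernoff bound gives
  P(|S_j| >= t lambda) <= 2 exp(-log(2d/delta)) = delta/d, and a union bound over j finishes.
*)

lemma nn_cond_exp_le_of_real_cond_exp_le:
  fixes g :: "'a \<Rightarrow> real"
  assumes M: "prob_space M" and sub: "subalgebra M G"
    and g_int: "integrable M g" and g_nonneg: "\<And>x. g x \<ge> 0"
    and bound: "AE x in M. real_cond_exp M G g x \<le> C"
  shows "AE x in M. nn_cond_exp M G (\<lambda>x. ennreal (g x)) x \<le> ennreal C"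
proof -
  interpret prob_space M by (rule M)
  interpret finite_measure_subalgebra M G by unfold_locales (rule sub)
  have [measurable]: "g \<in> borel_measurable M" using g_int by auto
  have "(\<lambda>x. ennreal (- g x)) = (\<lambda>x. 0)" using g_nonneg by (simp add: ennreal_neg)
  moreover have "AE x in M. 0 = nn_cond_exp M G (\<lambda>x. 0) x"
    by (rule nn_cond_exp_F_meas) auto
  ultimately have neg_part: "AE x in M. nn_cond_exp M G (\<lambda>x. ennreal (- g x)) x = 0"
    by simp
  have "(\<integral>\<^sup>+ x. 1 * nn_cond_exp M G (\<lambda>x. ennreal (g x)) x \<partial>M) = (\<integral>\<^sup>+ x. 1 * ennreal (g x) \<partial>M)"
    by (rule nn_cond_exp_intg) auto
  also have "\<dots> < \<infinity>" using g_int g_nonneg by (simp add: integrable_iff_bounded)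
  finally have "AE x in M. nn_cond_exp M G (\<lambda>x. ennreal (g x)) x \<noteq> \<infinity>"
    by (intro nn_integral_noteq_infinite) auto
  with neg_part bound show ?thesis
  proof eventually_elim
    case (elim x)
    then have "real_cond_exp M G g x = enn2real (nn_cond_exp M G (\<lambda>x. ennreal (g x)) x)"
      unfolding real_cond_exp_def by simp
    with elim show ?case by (cases "nn_cond_exp M G (\<lambda>x. ennreal (g x)) x") auto
  qed
qed

lemma nn_integral_mult_le_of_real_cond_exp_le:
  fixes g :: "'a \<Rightarrow> real" and W :: "'a \<Rightarrow> ennreal"
  assumes M: "prob_space M" and sub: "subalgebra M G"
    and W_meas: "W \<in> borel_measurable G"
    and g_int: "integrable M g" and g_nonneg: "\<And>x. g x \<ge> 0"
    and bound: "AE x in M. real_cond_exp M G g x \<le> C"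
  shows "(\<integral>\<^sup>+ x. W x * ennreal (g x) \<partial>M) \<le> ennreal C * (\<integral>\<^sup>+ x. W x \<partial>M)"
proof -
  interpret prob_space M by (rule M)
  interpret finite_measure_subalgebra M G by unfold_locales (rule sub)
  have [measurable]: "g \<in> borel_measurable M" using g_int by auto
  have "(\<integral>\<^sup>+ x. W x * ennreal (g x) \<partial>M) = (\<integral>\<^sup>+ x. W x * nn_cond_exp M G (\<lambda>x. ennreal (g x)) x \<partial>M)"
    by (rule nn_cond_exp_intg[symmetric]) (auto simp: W_meas)
  also have "\<dots> \<le> (\<integral>\<^sup>+ x. W x * ennreal C \<partial>M)"
    using nn_cond_exp_le_of_real_cond_exp_le[OF M sub g_int g_nonneg bound]
    by (intro nn_integral_mono_AE) (auto elim!: eventually_mono intro: mult_left_mono)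
  also have "\<dots> = ennreal C * (\<integral>\<^sup>+ x. W x \<partial>M)"
    using measurable_from_subalg[OF sub W_meas] by (subst nn_integral_multc) (auto simp: mult.commute)
  finally show ?thesis .
qed

lemma exp_mult_le_convex_comb:
  fixes c z e :: real
  assumes "\<bar>z\<bar> \<le> c" "c > 0"
  shows "exp (z * e) \<le> (c - z) / (2 * c) * exp (- c * e) + (c + z) / (2 * c) * exp (c * e)"
proof -
  define u where "u = (c + z) / (2 * c)"
  have "0 \<le> u" "u \<le> 1" using assms by (auto simp: u_def field_simps)
  then have "exp ((1 - u) * (- c * e) + u * (c * e)) \<le> (1 - u) * exp (- c * e) + u * exp (c * e)"
    using convex_onD[OF exp_convex, of u "- c * e" "c * e"] by simp
  moreover have "(1 - u) * (- c * e) + u * (c * e) = z * e" "1 - u = (c - z) / (2 * c)"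
    using assms by (simp_all add: u_def field_simps)
  ultimately show ?thesis by (simp add: u_def)
qed

lemma nn_integral_exp_mult_le:
  fixes W Z e :: "'a \<Rightarrow> real"
  assumes M: "prob_space M" and sub: "subalgebra M G"
    and W_meas[measurable]: "W \<in> borel_measurable G" and W_nonneg: "\<And>x. W x \<ge> 0"
    and Z_meas[measurable]: "Z \<in> borel_measurable G" and Z_bound: "\<And>x. \<bar>Z x\<bar> \<le> c"
    and e_meas[measurable]: "e \<in> borel_measurable M"
    and int_pos: "integrable M (\<lambda>x. exp (c * e x))"
    and int_neg: "integrable M (\<lambda>x. exp (- c * e x))"
    and bound_pos: "AE x in M. real_cond_exp M G (\<lambda>x. exp (c * e x)) x \<le> K"
    and bound_neg: "AE x in M. real_cond_exp M G (\<lambda>x. exp (- c * e x)) x \<le> K"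
    and K: "K \<ge> 1"
  shows "(\<integral>\<^sup>+ x. W x * exp (Z x * e x) \<partial>M) \<le> ennreal K * (\<integral>\<^sup>+ x. W x \<partial>M)"
proof (cases "c > 0")
  case False
  then have "Z x = 0" for x using Z_bound[of x] by linarith
  then have "(\<integral>\<^sup>+ x. W x * exp (Z x * e x) \<partial>M) = 1 * (\<integral>\<^sup>+ x. W x \<partial>M)" by simp
  also have "\<dots> \<le> ennreal K * (\<integral>\<^sup>+ x. W x \<partial>M)" using K by (intro mult_right_mono) auto
  finally show ?thesis .
next
  case True
  \<comment> \<open>By convexity, exp (Z e) lies below a G-measurable mixture of exp (-c e) and exp (c e),
     the two exponentials whose conditional expectations are controlled.\<close>
  define a where "a x = W x * ((c - Z x) / (2 * c))" for x
  define b where "b x = W x * ((c + Z x) / (2 * c))" for x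
  have a_nonneg: "a x \<ge> 0" and b_nonneg: "b x \<ge> 0" for x
    using W_nonneg[of x] Z_bound[of x] True by (auto simp: a_def b_def abs_le_iff)
  have [measurable]: "a \<in> borel_measurable G" "b \<in> borel_measurable G"
    unfolding a_def b_def by measurable
  have [measurable]: "W \<in> borel_measurable M" "a \<in> borel_measurable M" "b \<in> borel_measurable M"
    by (rule measurable_from_subalg[OF sub], measurable)+
  have "ennreal (W x * exp (Z x * e x)) \<le> a x * ennreal (exp (- c * e x)) + b x * ennreal (exp (c * e x))"
    for x
  proof -
    have "W x * exp (Z x * e x) \<le> a x * exp (- c * e x) + b x * exp (c * e x)"
      using mult_left_mono[OF exp_mult_le_convex_comb[OF Z_bound[of x] True, of "e x"] W_nonneg[of x]]
      by (simp add: a_def b_def algebra_simps)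
    then show ?thesis
      using a_nonneg[of x] b_nonneg[of x]
      by (simp add: ennreal_mult[symmetric] ennreal_plus[symmetric] ennreal_leI del: ennreal_plus)
  qed
  then have "(\<integral>\<^sup>+ x. W x * exp (Z x * e x) \<partial>M)
      \<le> (\<integral>\<^sup>+ x. a x * ennreal (exp (- c * e x)) + b x * ennreal (exp (c * e x)) \<partial>M)"
    by (intro nn_integral_mono)
  also have "\<dots> = (\<integral>\<^sup>+ x. a x * ennreal (exp (- c * e x)) \<partial>M) + (\<integral>\<^sup>+ x. b x * ennreal (exp (c * e x)) \<partial>M)"
    by (rule nn_integral_add) auto
  also have "\<dots> \<le> ennreal K * (\<integral>\<^sup>+ x. a x \<partial>M) + ennreal K * (\<integral>\<^sup>+ x. b x \<partial>M)"
    by (intro add_mono nn_integral_mult_le_of_real_cond_exp_le[OF M sub] int_pos int_neg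
        bound_pos bound_neg) auto
  also have "\<dots> = ennreal K * (\<integral>\<^sup>+ x. ennreal (a x) + ennreal (b x) \<partial>M)"
    by (simp add: nn_integral_add distrib_left)
  also have "(\<integral>\<^sup>+ x. ennreal (a x) + ennreal (b x) \<partial>M) = (\<integral>\<^sup>+ x. W x \<partial>M)"
    using a_nonneg b_nonneg True
    by (intro nn_integral_cong) (simp add: ennreal_plus[symmetric] a_def b_def field_simps del: ennreal_plus)
  finally show ?thesis .
qed

lemma measurable_filtration_mono:
  assumes filt: "filtration (space M) F" and sub: "\<And>n. subalgebra M (F n)"
    and f: "f \<in> borel_measurable (F i)" and "i \<le> j"
  shows "f \<in> borel_measurable (F j)"
proof (rule measurable_from_subalg[OF _ f])
  show "subalgebra (F j) (F i)"
    using sub filtration.sets_F_mono[OF filt \<open>i \<le> j\<close>] by (simp add: subalgebra_def)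
qed

lemma nn_integral_exp_martingale_le:
  fixes Z \<epsilon> :: "nat \<Rightarrow> 'a \<Rightarrow> real"
  assumes M: "prob_space M" and filt: "filtration (space M) F" and sub: "\<And>n. subalgebra M (F n)"
    and Z_meas: "\<And>\<tau>. Z \<tau> \<in> borel_measurable (F (\<tau> - 1))" and Z_bound: "\<And>\<tau> \<omega>. \<bar>Z \<tau> \<omega>\<bar> \<le> c"
    and eps_meas: "\<And>\<tau>. \<epsilon> \<tau> \<in> borel_measurable (F \<tau>)"
    and subg_int: "\<And>\<tau> \<alpha>. integrable M (\<lambda>\<omega>. exp (\<alpha> * \<epsilon> \<tau> \<omega>))"
    and subg: "\<And>\<tau> \<alpha>. AE \<omega> in M.
        real_cond_exp M (F (\<tau> - 1)) (\<lambda>\<omega>. exp (\<alpha> * \<epsilon> \<tau> \<omega>)) \<omega> \<le> exp (\<alpha>\<^sup>2 * \<sigma>\<^sup>2 / 2)"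
  shows "(\<integral>\<^sup>+ \<omega>. exp (\<Sum>\<tau>=1..k. Z \<tau> \<omega> * \<epsilon> \<tau> \<omega>) \<partial>M) \<le> exp (real k * c\<^sup>2 * \<sigma>\<^sup>2 / 2)"
proof (induction k)
  case 0
  then show ?case using prob_space.emeasure_space_1[OF M] by simp
next
  case (Suc k)
  have [measurable]: "Z (Suc k) \<in> borel_measurable (F k)"
    using Z_meas[of "Suc k"] by simp
  have "(\<lambda>\<omega>. \<Sum>\<tau>=1..k. Z \<tau> \<omega> * \<epsilon> \<tau> \<omega>) \<in> borel_measurable (F k)"
    by (intro borel_measurable_sum borel_measurable_times
        measurable_filtration_mono[OF filt sub Z_meas] measurable_filtration_mono[OF filt sub eps_meas])
      auto
  then have past_meas: "(\<lambda>\<omega>. exp (\<Sum>\<tau>=1..k. Z \<tau> \<omega> * \<epsilon> \<tau> \<omega>)) \<in> borel_measurable (F k)"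
    by measurable
  have "(\<integral>\<^sup>+ \<omega>. exp (\<Sum>\<tau>=1..Suc k. Z \<tau> \<omega> * \<epsilon> \<tau> \<omega>) \<partial>M)
      = (\<integral>\<^sup>+ \<omega>. exp (\<Sum>\<tau>=1..k. Z \<tau> \<omega> * \<epsilon> \<tau> \<omega>) * exp (Z (Suc k) \<omega> * \<epsilon> (Suc k) \<omega>) \<partial>M)"
    by (simp add: exp_add)
  also have "\<dots> \<le> ennreal (exp (c\<^sup>2 * \<sigma>\<^sup>2 / 2)) * (\<integral>\<^sup>+ \<omega>. exp (\<Sum>\<tau>=1..k. Z \<tau> \<omega> * \<epsilon> \<tau> \<omega>) \<partial>M)"
    using subg[of "Suc k" c] subg[of "Suc k" "- c"]
    by (intro nn_integral_exp_mult_le[OF M sub past_meas _ _ Z_bound] subg_int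
        measurable_from_subalg[OF sub eps_meas]) auto
  also have "\<dots> \<le> ennreal (exp (c\<^sup>2 * \<sigma>\<^sup>2 / 2)) * exp (real k * c\<^sup>2 * \<sigma>\<^sup>2 / 2)"
    by (intro mult_left_mono Suc.IH) simp
  also have "\<dots> = exp (real (Suc k) * c\<^sup>2 * \<sigma>\<^sup>2 / 2)"
    by (simp add: ennreal_mult[symmetric] exp_add[symmetric] algebra_simps)
  finally show ?case .
qed

lemma (in prob_space) prob_ge_le_subgaussian:
  assumes [measurable]: "f \<in> borel_measurable M" and v: "v > 0" and a: "a \<ge> 0"
    and mgf: "\<And>\<alpha>. (\<integral>\<^sup>+ \<omega>. exp (\<alpha> * f \<omega>) \<partial>M) \<le> exp (\<alpha>\<^sup>2 * v / 2)"
  shows "prob {\<omega> \<in> space M. f \<omega> \<ge> a} \<le> exp (- a\<^sup>2 / (2 * v))"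
proof (cases "a = 0")
  case False
  \<comment> \<open>Chernoff bound at the optimal exponent a / v.\<close>
  define s where "s = a / v"
  have s: "s > 0" using a v False by (simp add: s_def)
  have "emeasure M {\<omega> \<in> space M. f \<omega> \<ge> a}
      \<le> exp (- s * a) * (\<integral>\<^sup>+ \<omega>. ennreal (exp (s * f \<omega>)) * indicator (space M) \<omega> \<partial>M)"
    by (rule Chernoff_ineq_nn_integral_ge[OF s]) auto
  also have "(\<integral>\<^sup>+ \<omega>. ennreal (exp (s * f \<omega>)) * indicator (space M) \<omega> \<partial>M) = (\<integral>\<^sup>+ \<omega>. exp (s * f \<omega>) \<partial>M)"
    by (intro nn_integral_cong) simp
  also have "ennreal (exp (- s * a)) * \<dots> \<le> ennreal (exp (- s * a)) * exp (s\<^sup>2 * v / 2)"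
    by (intro mult_left_mono mgf) simp
  also have "\<dots> = exp (- a\<^sup>2 / (2 * v))"
    using v by (simp add: s_def ennreal_mult[symmetric] exp_add[symmetric] power2_eq_square field_simps)
  finally show ?thesis by (simp add: emeasure_eq_measure)
qed simp

lemma (in prob_space) prob_abs_ge_le_subgaussian:
  assumes [measurable]: "f \<in> borel_measurable M" and v: "v > 0" and a: "a \<ge> 0"
    and mgf: "\<And>\<alpha>. (\<integral>\<^sup>+ \<omega>. exp (\<alpha> * f \<omega>) \<partial>M) \<le> exp (\<alpha>\<^sup>2 * v / 2)"
  shows "prob {\<omega> \<in> space M. \<bar>f \<omega>\<bar> \<ge> a} \<le> 2 * exp (- a\<^sup>2 / (2 * v))"
proof -
  have mgf_neg: "(\<integral>\<^sup>+ \<omega>. exp (\<alpha> * - f \<omega>) \<partial>M) \<le> exp (\<alpha>\<^sup>2 * v / 2)" for \<alpha>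
    using mgf[of "- \<alpha>"] by simp
  have "{\<omega> \<in> space M. \<bar>f \<omega>\<bar> \<ge> a} = {\<omega> \<in> space M. f \<omega> \<ge> a} \<union> {\<omega> \<in> space M. - f \<omega> \<ge> a}"
    by auto
  then have "prob {\<omega> \<in> space M. \<bar>f \<omega>\<bar> \<ge> a}
      \<le> prob {\<omega> \<in> space M. f \<omega> \<ge> a} + prob {\<omega> \<in> space M. - f \<omega> \<ge> a}"
    by (simp add: measure_Un_le)
  also have "\<dots> \<le> exp (- a\<^sup>2 / (2 * v)) + exp (- a\<^sup>2 / (2 * v))"
    by (intro add_mono prob_ge_le_subgaussian[OF _ v a mgf] prob_ge_le_subgaussian[OF _ v a mgf_neg])
      auto
  finally show ?thesis by simp
qed

lemma prob_abs_martingale_sum_ge_le: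
  fixes Z \<epsilon> :: "nat \<Rightarrow> 'a \<Rightarrow> real"
  assumes M: "prob_space M" and filt: "filtration (space M) F" and sub: "\<And>n. subalgebra M (F n)"
    and Z_meas: "\<And>\<tau>. Z \<tau> \<in> borel_measurable (F (\<tau> - 1))" and Z_bound: "\<And>\<tau> \<omega>. \<bar>Z \<tau> \<omega>\<bar> \<le> c"
    and eps_meas: "\<And>\<tau>. \<epsilon> \<tau> \<in> borel_measurable (F \<tau>)"
    and subg_int: "\<And>\<tau> \<alpha>. integrable M (\<lambda>\<omega>. exp (\<alpha> * \<epsilon> \<tau> \<omega>))"
    and subg: "\<And>\<tau> \<alpha>. AE \<omega> in M.
        real_cond_exp M (F (\<tau> - 1)) (\<lambda>\<omega>. exp (\<alpha> * \<epsilon> \<tau> \<omega>)) \<omega> \<le> exp (\<alpha>\<^sup>2 * \<sigma>\<^sup>2 / 2)"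
    and v: "real k * c\<^sup>2 * \<sigma>\<^sup>2 > 0" and a: "a \<ge> 0"
  shows "prob_space.prob M {\<omega> \<in> space M. \<bar>\<Sum>\<tau>=1..k. Z \<tau> \<omega> * \<epsilon> \<tau> \<omega>\<bar> \<ge> a}
    \<le> 2 * exp (- a\<^sup>2 / (2 * (real k * c\<^sup>2 * \<sigma>\<^sup>2)))"
proof (rule prob_space.prob_abs_ge_le_subgaussian[OF M _ v a])
  show "(\<lambda>\<omega>. \<Sum>\<tau>=1..k. Z \<tau> \<omega> * \<epsilon> \<tau> \<omega>) \<in> borel_measurable M"
    by (intro borel_measurable_sum borel_measurable_times
        measurable_from_subalg[OF sub Z_meas] measurable_from_subalg[OF sub eps_meas])
  fix \<alpha> :: real
  have "\<bar>\<alpha> * Z \<tau> \<omega>\<bar> \<le> \<bar>\<alpha>\<bar> * c" for \<tau> \<omega>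
    using Z_bound by (simp add: abs_mult mult_left_mono)
  then have "(\<integral>\<^sup>+ \<omega>. exp (\<Sum>\<tau>=1..k. \<alpha> * Z \<tau> \<omega> * \<epsilon> \<tau> \<omega>) \<partial>M)
      \<le> exp (real k * (\<bar>\<alpha>\<bar> * c)\<^sup>2 * \<sigma>\<^sup>2 / 2)"
    by (intro nn_integral_exp_martingale_le[OF M filt sub _ _ eps_meas subg_int subg]
        borel_measurable_times Z_meas) auto
  then show "(\<integral>\<^sup>+ \<omega>. exp (\<alpha> * (\<Sum>\<tau>=1..k. Z \<tau> \<omega> * \<epsilon> \<tau> \<omega>)) \<partial>M)
      \<le> exp (\<alpha>\<^sup>2 * (real k * c\<^sup>2 * \<sigma>\<^sup>2) / 2)"
    by (simp add: sum_distrib_left mult.assoc power_mult_distrib mult_ac)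
qed

lemma (in prob_space) prob_compl_UN_ge:
  assumes "finite I" and "\<And>i. i \<in> I \<Longrightarrow> E i \<in> events" and "\<And>i. i \<in> I \<Longrightarrow> prob (E i) \<le> p"
  shows "prob (space M - (\<Union>i\<in>I. E i)) \<ge> 1 - real (card I) * p"
proof -
  have "prob (\<Union>i\<in>I. E i) \<le> (\<Sum>i\<in>I. prob (E i))"
    using assms by (intro finite_measure_subadditive_finite) auto
  also have "\<dots> \<le> real (card I) * p"
    using assms sum_mono[of I "\<lambda>i. prob (E i)" "\<lambda>_. p"] by simp
  finally show ?thesis
    using assms by (subst prob_compl) auto
qed

lemma abs_sum_mult_le_l1norm:
  fixes D :: "real^'d"
  assumes "\<And>j. \<bar>g j\<bar> \<le> B"
  shows "\<bar>\<Sum>j\<in>UNIV. D $ j * g j\<bar> \<le> B * l1norm D"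
proof -
  have "\<bar>\<Sum>j\<in>UNIV. D $ j * g j\<bar> \<le> (\<Sum>j\<in>UNIV. \<bar>D $ j\<bar> * B)"
    using assms by (intro order.trans[OF sum_abs] sum_mono) (simp add: abs_mult mult_left_mono)
  then show ?thesis by (simp add: l1norm_def sum_distrib_left mult.commute)
qed

lemma emp_proc_eq:
  assumes "\<And>\<tau>. Y \<tau> = \<mu> (X \<tau> \<bullet> \<beta>s) + e \<tau>"
  shows "emp_proc m \<mu> \<beta>s t X Y b = - (1 / real t) * (\<Sum>\<tau>=1..t. e \<tau> * (X \<tau> \<bullet> b))"
  unfolding emp_proc_def glm_loss_def glm_loss_bar_def
  by (simp add: assms algebra_simps sum_subtractf[symmetric] sum_distrib_left)

lemma emp_proc_diff_eq:
  fixes X :: "nat \<Rightarrow> real^'d"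
  assumes "\<And>\<tau>. Y \<tau> = \<mu> (X \<tau> \<bullet> \<beta>s) + e \<tau>"
  shows "emp_proc m \<mu> \<beta>s t X Y b - emp_proc m \<mu> \<beta>s t X Y \<beta>s
    = - (1 / real t) * (\<Sum>j\<in>UNIV. (b - \<beta>s) $ j * (\<Sum>\<tau>=1..t. X \<tau> $ j * e \<tau>))"
proof -
  have "emp_proc m \<mu> \<beta>s t X Y b - emp_proc m \<mu> \<beta>s t X Y \<beta>s
      = - (1 / real t) * (\<Sum>\<tau>=1..t. e \<tau> * (X \<tau> \<bullet> (b - \<beta>s)))"
    by (simp add: emp_proc_eq[where e = e, OF assms] inner_diff_right algebra_simps sum_subtractf)
  also have "(\<Sum>\<tau>=1..t. e \<tau> * (X \<tau> \<bullet> (b - \<beta>s)))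
      = (\<Sum>j\<in>UNIV. (b - \<beta>s) $ j * (\<Sum>\<tau>=1..t. X \<tau> $ j * e \<tau>))"
    unfolding inner_vec_def by (simp add: sum_distrib_left mult_ac) (rule sum.swap)
  finally show ?thesis .
qed

lemma abs_emp_proc_diff_le:
  fixes X :: "nat \<Rightarrow> real^'d"
  assumes "\<And>\<tau>. Y \<tau> = \<mu> (X \<tau> \<bullet> \<beta>s) + e \<tau>"
    and "\<And>j. \<bar>\<Sum>\<tau>=1..t. X \<tau> $ j * e \<tau>\<bar> \<le> real t * lam" and "t > 0"
  shows "\<bar>emp_proc m \<mu> \<beta>s t X Y b - emp_proc m \<mu> \<beta>s t X Y \<beta>s\<bar> \<le> lam * l1norm (b - \<beta>s)"
  using abs_sum_mult_le_l1norm[of _ "real t * lam" "b - \<beta>s", OF assms(2)] assms(3)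
  by (simp add: emp_proc_diff_eq[where e = e, OF assms(1)] abs_minus_cancel abs_divide field_simps)

lemma ex_event_abs_coordinate_sums_le:
  fixes M :: "'a measure" and F :: "nat \<Rightarrow> 'a measure"
    and X :: "nat \<Rightarrow> 'a \<Rightarrow> real^'d" and \<epsilon> :: "nat \<Rightarrow> 'a \<Rightarrow> real"
  assumes M: "prob_space M" and filt: "filtration (space M) F" and subalg: "\<And>n. subalgebra M (F n)"
    and X_meas: "\<And>\<tau>. X \<tau> \<in> borel_measurable (F (\<tau> - 1))"
    and eps_meas: "\<And>\<tau>. \<epsilon> \<tau> \<in> borel_measurable (F \<tau>)"
    and subg_int: "\<And>\<tau> \<alpha>. integrable M (\<lambda>\<omega>. exp (\<alpha> * \<epsilon> \<tau> \<omega>))"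
    and subg: "\<And>\<tau> \<alpha>. AE \<omega> in M.
        real_cond_exp M (F (\<tau> - 1)) (\<lambda>\<omega>. exp (\<alpha> * \<epsilon> \<tau> \<omega>)) \<omega> \<le> exp (\<alpha>\<^sup>2 * \<sigma>\<^sup>2 / 2)"
    and sigma_pos: "\<sigma> > 0" and X_bound: "\<And>\<tau> \<omega>. norm (X \<tau> \<omega>) \<le> xmax"
    and t: "t > 0" and delta: "0 < \<delta>" "\<delta> < 1"
  defines "lam \<equiv> \<sigma> * xmax * sqrt (2 * (ln (2 / \<delta>) + ln (real CARD('d))) / real t)"
  shows "\<exists>A \<in> sets M. prob_space.prob M A \<ge> 1 - \<delta> \<and>
    (\<forall>\<omega>\<in>A. \<forall>j. \<bar>\<Sum>\<tau>=1..t. X \<tau> \<omega> $ j * \<epsilon> \<tau> \<omega>\<bar> \<le> real t * lam)"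
proof -
  interpret prob_space M by (rule M)
  define S where "S j \<omega> = (\<Sum>\<tau>=1..t. X \<tau> \<omega> $ j * \<epsilon> \<tau> \<omega>)" for j \<omega>
  have X_comp_meas: "(\<lambda>\<omega>. X \<tau> \<omega> $ j) \<in> borel_measurable (F (\<tau> - 1))" for \<tau> j
    by (intro borel_measurable_continuous_on[OF _ X_meas] continuous_intros)
  have [measurable]: "S j \<in> borel_measurable M" for j
    unfolding S_def by (intro borel_measurable_sum borel_measurable_times
        measurable_from_subalg[OF subalg X_comp_meas] measurable_from_subalg[OF subalg eps_meas])
  have X_comp: "\<bar>X \<tau> \<omega> $ j\<bar> \<le> xmax" for \<tau> \<omega> j
    using component_le_norm_cart X_bound order.trans by blast
  show ?thesis
  proof (cases "xmax = 0")
    case True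
    then have "X \<tau> \<omega> $ j = 0" for \<tau> \<omega> j using X_comp[of \<tau> \<omega> j] by simp
    then show ?thesis using delta by (intro bexI[of _ "space M"]) (simp_all add: S_def prob_space lam_def True)
  next
    case False
    then have xmax: "xmax > 0" using X_comp[of 0 undefined undefined] by linarith
    define E where "E j = {\<omega> \<in> space M. \<bar>S j \<omega>\<bar> \<ge> real t * lam}" for j
    have "prob (E j) \<le> \<delta> / CARD('d)" for j
    proof -
      have "prob (E j) \<le> 2 * exp (- (real t * lam)\<^sup>2 / (2 * (real t * xmax\<^sup>2 * \<sigma>\<^sup>2)))"
        unfolding E_def S_def using t xmax sigma_pos delta
        by (intro prob_abs_martingale_sum_ge_le[OF M filt subalg _ X_comp eps_meas subg_int subg]
            X_comp_meas) (auto simp: lam_def)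
      also have "\<dots> = \<delta> / CARD('d)"
      proof -
        have "(real t * lam)\<^sup>2 / (2 * (real t * xmax\<^sup>2 * \<sigma>\<^sup>2)) = ln (2 / \<delta>) + ln (real CARD('d))"
          using t xmax sigma_pos delta
          by (simp add: lam_def power_mult_distrib power2_eq_square field_simps)
        then show ?thesis using delta by (simp add: exp_diff exp_minus)
      qed
      finally show ?thesis .
    qed
    then have "prob (space M - (\<Union>j. E j)) \<ge> 1 - \<delta>"
      using prob_compl_UN_ge[of UNIV E "\<delta> / CARD('d)"] by (simp add: E_def measurable)
    moreover have "space M - (\<Union>j. E j) \<in> events" unfolding E_def by measurable
    ultimately show ?thesis
      by (intro bexI[of _ "space M - (\<Union>j. E j)"]) (auto simp: E_def S_def not_le less_imp_le)
  qed
qed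

theorem lemma4:
  fixes M :: "'a measure" and F :: "nat \<Rightarrow> 'a measure"
    and X :: "nat \<Rightarrow> 'a \<Rightarrow> real^'d" and Y \<epsilon> :: "nat \<Rightarrow> 'a \<Rightarrow> real"
    and \<beta>s :: "real^'d" and \<mu> m :: "real \<Rightarrow> real"
    and \<sigma> xmax \<delta> lam :: real and t :: nat
    and \<beta>hat :: "'a \<Rightarrow> real^'d"
  assumes M: "prob_space M"
    and filt: "filtration (space M) F"
    and subalg: "\<And>n. subalgebra M (F n)"
    and X_meas: "\<And>\<tau>. X \<tau> \<in> borel_measurable (F (\<tau> - 1))"
    and eps_meas: "\<And>\<tau>. \<epsilon> \<tau> \<in> borel_measurable (F \<tau>)"
    and Y_def: "\<And>\<tau> \<omega>. Y \<tau> \<omega> = \<mu> (X \<tau> \<omega> \<bullet> \<beta>s) + \<epsilon> \<tau> \<omega>"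
    and subg_int: "\<And>\<tau> \<alpha>. integrable M (\<lambda>\<omega>. exp (\<alpha> * \<epsilon> \<tau> \<omega>))"
    and subg: "\<And>\<tau> \<alpha>. AE \<omega> in M.
        real_cond_exp M (F (\<tau> - 1)) (\<lambda>\<omega>. exp (\<alpha> * \<epsilon> \<tau> \<omega>)) \<omega> \<le> exp (\<alpha>\<^sup>2 * \<sigma>\<^sup>2 / 2)"
    and sigma_pos: "\<sigma> > 0"
    and m_convex: "convex_on UNIV m"
    and m_deriv: "\<And>u. (m has_real_derivative \<mu> u) (at u)"
    and X_bound: "\<And>\<tau> \<omega>. norm (X \<tau> \<omega>) \<le> xmax"
    and t_pos: "t \<ge> 1"
    and lam_pos: "lam > 0"
    and lasso: "\<And>\<omega> \<beta>. \<omega> \<in> space M \<Longrightarrow>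
        glm_loss m t (\<lambda>\<tau>. X \<tau> \<omega>) (\<lambda>\<tau>. Y \<tau> \<omega>) (\<beta>hat \<omega>) + lam * l1norm (\<beta>hat \<omega>)
        \<le> glm_loss m t (\<lambda>\<tau>. X \<tau> \<omega>) (\<lambda>\<tau>. Y \<tau> \<omega>) \<beta> + lam * l1norm \<beta>"
    and delta: "0 < \<delta>" "\<delta> < 1"
  shows "\<exists>A \<in> sets M. prob_space.prob M A \<ge> 1 - \<delta> \<and>
    (\<forall>\<omega>\<in>A.
      \<bar>emp_proc m \<mu> \<beta>s t (\<lambda>\<tau>. X \<tau> \<omega>) (\<lambda>\<tau>. Y \<tau> \<omega>) (\<beta>hat \<omega>)
       - emp_proc m \<mu> \<beta>s t (\<lambda>\<tau>. X \<tau> \<omega>) (\<lambda>\<tau>. Y \<tau> \<omega>) \<beta>s\<bar>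
      \<le> \<sigma> * xmax * sqrt (2 * (ln (2 / \<delta>) + ln (real CARD('d))) / real t)
         * l1norm (\<beta>hat \<omega> - \<beta>s))"
proof -
  have t: "t > 0" using t_pos by simp
  obtain A where "A \<in> sets M" "prob_space.prob M A \<ge> 1 - \<delta>"
    and small: "\<And>\<omega> j. \<omega> \<in> A \<Longrightarrow> \<bar>\<Sum>\<tau>=1..t. X \<tau> \<omega> $ j * \<epsilon> \<tau> \<omega>\<bar>
      \<le> real t * (\<sigma> * xmax * sqrt (2 * (ln (2 / \<delta>) + ln (real CARD('d))) / real t))"
    using ex_event_abs_coordinate_sums_le[OF M filt subalg X_meas eps_meas subg_int subg
        sigma_pos X_bound t delta] by blast
  moreover have "\<bar>emp_proc m \<mu> \<beta>s t (\<lambda>\<tau>. X \<tau> \<omega>) (\<lambda>\<tau>. Y \<tau> \<omega>) (\<beta>hat \<omega>)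
       - emp_proc m \<mu> \<beta>s t (\<lambda>\<tau>. X \<tau> \<omega>) (\<lambda>\<tau>. Y \<tau> \<omega>) \<beta>s\<bar>
      \<le> \<sigma> * xmax * sqrt (2 * (ln (2 / \<delta>) + ln (real CARD('d))) / real t)
         * l1norm (\<beta>hat \<omega> - \<beta>s)" if "\<omega> \<in> A" for \<omega>
    by (rule abs_emp_proc_diff_le[where e = "\<lambda>\<tau>. \<epsilon> \<tau> \<omega>", OF Y_def small[OF that] t])
  ultimately show ?thesis by blast
qed

end
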